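(* Under the hypotheses of the cluster expansion theorem (namely: $(\mathbb A,\mathcal A,\mu)$ a measure space with complex measure $\mu$, $|\mu|(\mathbb A)<\infty$; $\zeta$ complex, measurable, symmetric with $|1+\zeta(A,A')|\le1$ for all $A,A'$; $a\ge0$ measurable with $\int d|\mu|(A')\,|\zeta(A,A')|\,e^{a(A')}\le a(A)$ for all $A$ and $\int d|\mu|\,e^{a}<\infty$), one has for all $A\in\mathbb A$ $$\sum_{n\ge1}\int d|\mu|(A_1)\cdots\int d|\mu|(A_n)\Big(\sum_{i=1}^n|\zeta(A,A_i)|\Big)|\varphi(A_1,\dots,A_n)|\le a(A).$$
   Context: $|\mu|$ denotes the total variation of $\mu$. Let $\mathcal C_n$ be the set of connected (unoriented, simple) graphs on the vertex set $\{1,\dots,n\}$. Define $\varphi(A_1)=1$ and, for $n\ge2$, $\varphi(A_1,\dots,A_n)=\frac1{n!}\sum_{G\in\mathcal C_n}\prod_{(i,j)\in G}\zeta(A_i,A_j)$, the product being over the edges of $G$. *)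

theory Defs
  imports "HOL-Analysis.Analysis"
begin

text \<open>Simple graphs on the vertex set {0..<n} (the paper's {1..n}, shifted by one).
  An edge is stored as a pair (i,j) with i < j < n.\<close>

definition graph_edges :: "nat \<Rightarrow> (nat \<times> nat) set" where
  "graph_edges n = {(i, j). i < j \<and> j < n}"

definition connected_graph :: "nat \<Rightarrow> (nat \<times> nat) set \<Rightarrow> bool" where
  "connected_graph n G \<longleftrightarrow> G \<subseteq> graph_edges n \<and>
     (\<forall>i<n. \<forall>j<n. (i, j) \<in> (G \<union> G\<inverse>)\<^sup>*)"

definition conn_graphs :: "nat \<Rightarrow> (nat \<times> nat) set set" where
  "conn_graphs n = {G. connected_graph n G}"

text \<open>The Ursell function phi(A_1,...,A_n), the points being x 0, ..., x (n-1).\<close>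
definition ursell :: "('a \<Rightarrow> 'a \<Rightarrow> complex) \<Rightarrow> nat \<Rightarrow> (nat \<Rightarrow> 'a) \<Rightarrow> complex" where
  "ursell \<zeta> n x = (if n = 1 then 1 else
     (1 / of_nat (fact n)) * (\<Sum>G\<in>conn_graphs n. \<Prod>(i, j)\<in>G. \<zeta> (x i) (x j)))"

end

theory Submission
  imports Defs
begin

text \<open>
  Write C(V) for the sum over connected graphs on V
  of the product of \<zeta> over the edges. Deleting a root r from a connected graph on insert r R
  leaves connected components K partitioning R, each joined to r by a nonempty set of edges, so
  C(insert r R) is the sum over set partitions of R of the products over the blocks K of
  C(K) ((\<Prod>u\<in>K. 1 + \<zeta>(r, u)) - 1). Since |1 + \<zeta>| \<le> 1, each factor is at most
  |C(K)| \<Sum>u\<in>K. |\<zeta>(r, u)|. Integrating out the points and using the symmetry under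
  relabelling, the (m+1)-st term of the series at B is at most the integral of |\<zeta>(B, y)| against
  the coefficient of z^m in exp (\<Sum>k. t_k(y) z^k), where t_k(y) is the k-th term of the series
  at y. So if the first N terms are bounded by a everywhere, the first N + 1 terms at B are bounded
  by \<integral> |\<zeta>(B, y)| e^a(y) d|\<mu>|(y) \<le> a(B), and the theorem follows by induction on N.
\<close>

section \<open>Sums over graphs on finite sets of vertices\<close>

definition complete_edges :: "nat set \<Rightarrow> (nat \<times> nat) set" where
  "complete_edges V = {(i, j). i < j \<and> i \<in> V \<and> j \<in> V}"

definition connected_on :: "nat set \<Rightarrow> (nat \<times> nat) set \<Rightarrow> bool" where
  "connected_on V G \<longleftrightarrow> G \<subseteq> complete_edges V \<and> (\<forall>i\<in>V. \<forall>j\<in>V. (i, j) \<in> (G \<union> G\<inverse>)\<^sup>*)"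

definition component :: "(nat \<times> nat) set \<Rightarrow> nat \<Rightarrow> nat set" where
  "component F v = {j. (v, j) \<in> (F \<union> F\<inverse>)\<^sup>*}"

definition graph_sum :: "(nat \<times> nat \<Rightarrow> 'b::comm_ring_1) \<Rightarrow> nat set \<Rightarrow> 'b" where
  "graph_sum w V = (\<Prod>e\<in>complete_edges V. 1 + w e)"

definition conn_graph_sum :: "(nat \<times> nat \<Rightarrow> 'b::comm_ring_1) \<Rightarrow> nat set \<Rightarrow> 'b" where
  "conn_graph_sum w V = (\<Sum>G | connected_on V G. \<Prod>e\<in>G. w e)"

lemma finite_complete_edges [simp]: "finite V \<Longrightarrow> finite (complete_edges V)"
  by (rule finite_subset[of _ "V \<times> V"]) (auto simp: complete_edges_def)

lemma finite_connected_on [simp]: "finite V \<Longrightarrow> finite {G. connected_on V G}"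
  by (rule finite_subset[of _ "Pow (complete_edges V)"]) (auto simp: connected_on_def)

lemma complete_edges_mono: "A \<subseteq> B \<Longrightarrow> complete_edges A \<subseteq> complete_edges B"
  by (auto simp: complete_edges_def)

lemma complete_edges_disjoint: "A \<inter> B = {} \<Longrightarrow> complete_edges A \<inter> complete_edges B = {}"
  by (auto simp: complete_edges_def)

lemma graph_sum_eq_sum_Pow: "finite V \<Longrightarrow> graph_sum w V = (\<Sum>F\<in>Pow (complete_edges V). \<Prod>e\<in>F. w e)"
  unfolding graph_sum_def by (subst add.commute) (simp add: prod_add)

lemma graph_sum_empty [simp]: "graph_sum w {} = 1"
  by (simp add: graph_sum_def complete_edges_def)

lemma rtrancl_sym_converse: "(i, j) \<in> (F \<union> F\<inverse>)\<^sup>* \<Longrightarrow> (j, i) \<in> (F \<union> F\<inverse>)\<^sup>*"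
  by (metis converse_Un converse_converse rtrancl_converseI sup_commute)

lemma component_subset:
  assumes "F \<subseteq> complete_edges V" "v \<in> V"
  shows "component F v \<subseteq> V"
proof
  fix j assume "j \<in> component F v"
  then have "(v, j) \<in> (F \<union> F\<inverse>)\<^sup>*" by (simp add: component_def)
  then show "j \<in> V"
    by (induction rule: rtrancl_induct) (use assms in \<open>auto simp: complete_edges_def\<close>)
qed

lemma edge_in_component_iff: "(i, j) \<in> F \<Longrightarrow> i \<in> component F v \<longleftrightarrow> j \<in> component F v"
  unfolding component_def by (blast intro: rtrancl_into_rtrancl)

lemma rtrancl_within_component:
  assumes "(v, j) \<in> (F \<union> F\<inverse>)\<^sup>*" "F \<subseteq> complete_edges V"
  shows "(v, j) \<in> (F \<inter> complete_edges (component F v) \<union> (F \<inter> complete_edges (component F v))\<inverse>)\<^sup>*"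
  using assms(1)
proof (induction rule: rtrancl_induct)
  case (step y z)
  then have "y \<in> component F v" "z \<in> component F v"
    by (auto simp: component_def intro: rtrancl_into_rtrancl)
  with step(2) assms(2) have "(y, z) \<in> F \<inter> complete_edges (component F v) \<union> (F \<inter> complete_edges (component F v))\<inverse>"
    by (auto simp: complete_edges_def)
  with step(3) show ?case by (rule rtrancl_into_rtrancl)
qed simp

lemma connected_on_component:
  assumes "F \<subseteq> complete_edges V"
  shows "connected_on (component F v) (F \<inter> complete_edges (component F v))"
  unfolding connected_on_def
proof (intro conjI ballI)
  let ?F = "F \<inter> complete_edges (component F v)"
  fix i j assume "i \<in> component F v" "j \<in> component F v"
  then have "(v, i) \<in> (?F \<union> ?F\<inverse>)\<^sup>*" "(v, j) \<in> (?F \<union> ?F\<inverse>)\<^sup>*"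
    using rtrancl_within_component[OF _ assms] by (auto simp: component_def)
  then show "(i, j) \<in> (?F \<union> ?F\<inverse>)\<^sup>*"
    by (blast intro: rtrancl_trans rtrancl_sym_converse)
qed auto

lemma graph_split_component:
  assumes "F \<subseteq> complete_edges V"
  shows "F = (F \<inter> complete_edges (component F v)) \<union> (F \<inter> complete_edges (V - component F v))"
  using assms edge_in_component_iff by (fastforce simp: complete_edges_def)

lemma component_Un:
  assumes G: "connected_on K G" and H: "H \<subseteq> complete_edges (V - K)" and v: "v \<in> K"
  shows "component (G \<union> H) v = K"
proof
  have "G \<union> G\<inverse> \<subseteq> (G \<union> H) \<union> (G \<union> H)\<inverse>" by auto
  then show "K \<subseteq> component (G \<union> H) v"
    using G v rtrancl_mono unfolding connected_on_def component_def by blast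
next
  show "component (G \<union> H) v \<subseteq> K"
  proof
    fix j assume "j \<in> component (G \<union> H) v"
    then have "(v, j) \<in> ((G \<union> H) \<union> (G \<union> H)\<inverse>)\<^sup>*" by (simp add: component_def)
    then show "j \<in> K"
    proof (induction rule: rtrancl_induct)
      case (step y z)
      have "G \<subseteq> complete_edges K" using G by (simp add: connected_on_def)
      with H step show ?case by (auto simp: complete_edges_def)
    qed (rule v)
  qed
qed

lemma bij_betw_component_decomposition:
  assumes "v \<in> V"
  shows "bij_betw (\<lambda>(K, G, H). G \<union> H)
    (SIGMA K:{K. K \<subseteq> V \<and> v \<in> K}. {G. connected_on K G} \<times> Pow (complete_edges (V - K)))
    (Pow (complete_edges V))"
proof -
  have join: "component (G \<union> H) v = K \<and> (G \<union> H) \<inter> complete_edges K = G \<and>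
      (G \<union> H) \<inter> complete_edges (V - K) = H \<and> G \<union> H \<subseteq> complete_edges V"
    if K: "K \<subseteq> V" "v \<in> K" and G: "connected_on K G" and H: "H \<subseteq> complete_edges (V - K)"
    for K G H
  proof -
    have "complete_edges K \<inter> complete_edges (V - K) = {}" by (rule complete_edges_disjoint) auto
    moreover have "G \<subseteq> complete_edges K" using G by (simp add: connected_on_def)
    moreover have "complete_edges K \<subseteq> complete_edges V" "complete_edges (V - K) \<subseteq> complete_edges V"
      using K complete_edges_mono[of K V] complete_edges_mono[of "V - K" V] by auto
    ultimately show ?thesis using component_Un[OF G H K(2)] H by blast
  qed
  let ?S = "SIGMA K:{K. K \<subseteq> V \<and> v \<in> K}. {G. connected_on K G} \<times> Pow (complete_edges (V - K))"
  let ?f = "\<lambda>(K, G, H). G \<union> H"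
  let ?g = "\<lambda>F. (component F v, F \<inter> complete_edges (component F v), F \<inter> complete_edges (V - component F v))"
  have g_f: "?g (?f a) = a" and f_in: "?f a \<in> Pow (complete_edges V)" if "a \<in> ?S" for a
  proof -
    from that obtain K G H where a: "a = (K, G, H)" and
      KGH: "K \<subseteq> V" "v \<in> K" "connected_on K G" "H \<subseteq> complete_edges (V - K)" by auto
    from join[OF KGH] show "?g (?f a) = a" "?f a \<in> Pow (complete_edges V)" by (simp_all add: a)
  qed
  have f_g: "?f (?g F) = F" and g_in: "?g F \<in> ?S" if "F \<in> Pow (complete_edges V)" for F
  proof -
    from that have F: "F \<subseteq> complete_edges V" by simp
    have "v \<in> component F v" by (simp add: component_def)
    with component_subset[OF F assms] connected_on_component[OF F] graph_split_component[OF F, symmetric]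
    show "?f (?g F) = F" "?g F \<in> ?S" by simp_all
  qed
  show ?thesis
    by (rule bij_betw_byWitness[where f' = ?g]; intro ballI image_subsetI g_f f_in f_g g_in)
qed

lemma graph_sum_decompose:
  assumes V: "finite V" and v: "v \<in> V"
  shows "graph_sum w V = (\<Sum>K | K \<subseteq> V \<and> v \<in> K. conn_graph_sum w K * graph_sum w (V - K))"
proof -
  let ?S = "SIGMA K:{K. K \<subseteq> V \<and> v \<in> K}. {G. connected_on K G} \<times> Pow (complete_edges (V - K))"
  have fin: "finite K" "finite (V - K)" if "K \<subseteq> V" for K using that V finite_subset by auto
  have "graph_sum w V = (\<Sum>F\<in>Pow (complete_edges V). \<Prod>e\<in>F. w e)"
    using V by (rule graph_sum_eq_sum_Pow)
  also have "\<dots> = (\<Sum>(K, G, H)\<in>?S. \<Prod>e\<in>G \<union> H. w e)"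
    using sum.reindex_bij_betw[OF bij_betw_component_decomposition[OF v], of "prod w"]
    by (simp add: case_prod_beta)
  also have "\<dots> = (\<Sum>(K, G, H)\<in>?S. (\<Prod>e\<in>G. w e) * (\<Prod>e\<in>H. w e))"
  proof (intro sum.cong refl, clarsimp)
    fix K G H assume "K \<subseteq> V" "connected_on K G" "H \<subseteq> complete_edges (V - K)"
    moreover have "complete_edges K \<inter> complete_edges (V - K) = {}" by (rule complete_edges_disjoint) auto
    ultimately show "prod w (G \<union> H) = prod w G * prod w H"
      using fin by (intro prod.union_disjoint) (auto simp: connected_on_def intro: finite_subset)
  qed
  also have "\<dots> = (\<Sum>K | K \<subseteq> V \<and> v \<in> K. \<Sum>G | connected_on K G. \<Sum>H\<in>Pow (complete_edges (V - K)). (\<Prod>e\<in>G. w e) * (\<Prod>e\<in>H. w e))"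
    using V fin by (simp add: sum.Sigma sum.cartesian_product split_def)
  also have "\<dots> = (\<Sum>K | K \<subseteq> V \<and> v \<in> K. conn_graph_sum w K * graph_sum w (V - K))"
    using fin by (auto simp: conn_graph_sum_def graph_sum_eq_sum_Pow sum_product intro!: sum.cong)
  finally show ?thesis .
qed

section \<open>The exponential of a set function\<close>

lemma sum_swap_dependent:
  assumes "finite A" "finite A'" "\<And>x. x \<in> A \<Longrightarrow> finite (B x)" "\<And>y. y \<in> A' \<Longrightarrow> finite (B' y)"
    and "\<And>x y. x \<in> A \<and> y \<in> B x \<longleftrightarrow> y \<in> A' \<and> x \<in> B' y"
  shows "(\<Sum>x\<in>A. \<Sum>y\<in>B x. f x y) = (\<Sum>y\<in>A'. \<Sum>x\<in>B' y. f x y)"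
proof -
  have "Sigma A B = prod.swap ` Sigma A' B'"
    using assms(5) by force
  then have "(\<Sum>(x, y)\<in>Sigma A B. f x y) = (\<Sum>(y, x)\<in>Sigma A' B'. f x y)"
    by (simp add: sum.reindex comp_def case_prod_unfold)
  with assms(1-4) show ?thesis by (simp add: sum.Sigma)
qed

lemma finite_subsets_with [simp]: "finite S \<Longrightarrow> finite {K. K \<subseteq> S \<and> P K}"
  by (rule finite_subset[of _ "Pow S"]) auto

text \<open>conv_pow c l R sums the products of c over the ordered partitions of R into l nonempty
  blocks, so conv_exp c R sums the products of c over the set partitions of R.\<close>

fun conv_pow :: "('a set \<Rightarrow> 'b::comm_ring_1) \<Rightarrow> nat \<Rightarrow> 'a set \<Rightarrow> 'b" where
  "conv_pow c 0 R = (if R = {} then 1 else 0)"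
| "conv_pow c (Suc l) R = (\<Sum>K | K \<subseteq> R \<and> K \<noteq> {}. c K * conv_pow c l (R - K))"

definition conv_exp :: "('a set \<Rightarrow> 'b::field_char_0) \<Rightarrow> 'a set \<Rightarrow> 'b" where
  "conv_exp c R = (\<Sum>l\<le>card R. conv_pow c l R / fact l)"

lemma conv_pow_eq_0: "finite R \<Longrightarrow> card R < l \<Longrightarrow> conv_pow c l R = 0"
proof (induction l arbitrary: R)
  case (Suc l)
  have "conv_pow c l (R - K) = 0" if "K \<subseteq> R" "K \<noteq> {}" for K
  proof (rule Suc.IH)
    have "card K > 0" using that Suc.prems(1) finite_subset by (metis card_gt_0_iff)
    then show "card (R - K) < l"
      using that Suc.prems card_Diff_subset[of K R] card_mono[of R K] finite_subset by fastforce
  qed (use Suc.prems in simp)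
  then show ?case by simp
qed simp

lemma conv_exp_eq_sum_atMost: "finite R \<Longrightarrow> card R \<le> n \<Longrightarrow> conv_exp c R = (\<Sum>l\<le>n. conv_pow c l R / fact l)"
  unfolding conv_exp_def by (rule sum.mono_neutral_left) (auto simp: conv_pow_eq_0)

lemma conv_exp_empty [simp]: "conv_exp c {} = 1"
  by (simp add: conv_exp_def)

lemma conv_pow_cong: "(\<And>K. K \<subseteq> R \<Longrightarrow> c K = c' K) \<Longrightarrow> conv_pow c l R = conv_pow c' l R"
proof (induction l arbitrary: R)
  case (Suc l)
  have "conv_pow c l (R - K) = conv_pow c' l (R - K)" if "K \<subseteq> R" for K
    using Suc.prems by (intro Suc.IH) auto
  then show ?case using Suc.prems by (auto intro!: sum.cong)
qed simp

text \<open>The factor Suc l counts the position of the block containing v.\<close>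
lemma conv_pow_Suc_pivot:
  assumes "finite R" "v \<in> R"
  shows "conv_pow c (Suc l) R = of_nat (Suc l) * (\<Sum>K | K \<subseteq> R \<and> v \<in> K. c K * conv_pow c l (R - K))"
  using assms
proof (induction l arbitrary: R)
  case 0
  have "(\<Sum>K\<in>S. c K * conv_pow c 0 (R - K)) = c R" if "R \<in> S" "finite S" "\<forall>K\<in>S. K \<subseteq> R" for S
  proof -
    have "(\<Sum>K\<in>S. c K * conv_pow c 0 (R - K)) = (\<Sum>K\<in>S. if K = R then c K else 0)"
      using that by (intro sum.cong) auto
    with that show ?thesis by simp
  qed
  moreover have "R \<noteq> {}" using 0 by auto
  ultimately show ?case using 0 by simp
next
  case (Suc l)
  let ?A = "{K. K \<subseteq> R \<and> v \<in> K}"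
  let ?B = "{K. K \<subseteq> R \<and> K \<noteq> {} \<and> v \<notin> K}"
  have "{K. K \<subseteq> R \<and> K \<noteq> {}} = ?A \<union> ?B" by auto
  then have "conv_pow c (Suc (Suc l)) R =
      (\<Sum>K\<in>?A. c K * conv_pow c (Suc l) (R - K)) + (\<Sum>K\<in>?B. c K * conv_pow c (Suc l) (R - K))"
    using Suc.prems by (simp only: conv_pow.simps) (rule sum.union_disjoint, auto)
  also have "(\<Sum>K\<in>?B. c K * conv_pow c (Suc l) (R - K)) =
      (\<Sum>K\<in>?B. \<Sum>K' | K' \<subseteq> R - K \<and> v \<in> K'. of_nat (Suc l) * (c K * c K' * conv_pow c l (R - K - K')))"
    using Suc by (intro sum.cong refl) (simp add: Suc.IH sum_distrib_left algebra_simps)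
  also have "\<dots> = (\<Sum>K'\<in>?A. \<Sum>K | K \<subseteq> R - K' \<and> K \<noteq> {}. of_nat (Suc l) * (c K * c K' * conv_pow c l (R - K - K')))"
    by (rule sum_swap_dependent) (use Suc.prems in auto)
  also have "\<dots> = of_nat (Suc l) * (\<Sum>K\<in>?A. c K * conv_pow c (Suc l) (R - K))"
    by (auto simp: sum_distrib_left algebra_simps Diff_eq Int_commute Int_left_commute intro!: sum.cong)
  finally show ?case by (simp add: algebra_simps)
qed

lemma conv_exp_pivot:
  assumes R: "finite R" and v: "v \<in> R"
  shows "conv_exp c R = (\<Sum>K | K \<subseteq> R \<and> v \<in> K. c K * conv_exp c (R - K))"
proof -
  obtain m where m: "card R = Suc m" using R v by (metis card_0_eq empty_iff not0_implies_Suc)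
  have card_le: "card (R - K) \<le> m" if "K \<subseteq> R" "v \<in> K" for K
    using that R m card_mono[of "R - {v}" "R - K"] v by auto
  have "conv_exp c R = (\<Sum>l\<le>m. conv_pow c (Suc l) R / fact (Suc l))"
    using v by (simp add: conv_exp_def m sum.atMost_Suc_shift del: sum.atMost_Suc) blast
  also have "\<dots> = (\<Sum>l\<le>m. \<Sum>K | K \<subseteq> R \<and> v \<in> K. c K * (conv_pow c l (R - K) / fact l))"
    by (intro sum.cong refl, subst conv_pow_Suc_pivot[OF R v]) (simp add: sum_divide_distrib del: of_nat_Suc)
  also have "\<dots> = (\<Sum>K | K \<subseteq> R \<and> v \<in> K. c K * conv_exp c (R - K))"
    using R card_le by (subst sum.swap) (simp add: sum_distrib_left conv_exp_eq_sum_atMost[where n = m])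
  finally show ?thesis .
qed

lemma graph_sum_eq_conv_exp: "finite R \<Longrightarrow> graph_sum w R = conv_exp (conn_graph_sum w) R"
proof (induction R rule: finite_psubset_induct)
  case (psubset R)
  show ?case
  proof (cases "R = {}")
    case False
    then obtain v where v: "v \<in> R" by auto
    have "graph_sum w R = (\<Sum>K | K \<subseteq> R \<and> v \<in> K. conn_graph_sum w K * graph_sum w (R - K))"
      by (rule graph_sum_decompose[OF psubset.hyps(1) v])
    also have "\<dots> = (\<Sum>K | K \<subseteq> R \<and> v \<in> K. conn_graph_sum w K * conv_exp (conn_graph_sum w) (R - K))"
      using psubset by (intro sum.cong refl) auto
    also have "\<dots> = conv_exp (conn_graph_sum w) R"
      by (rule conv_exp_pivot[OF psubset.hyps(1) v, symmetric])
    finally show ?thesis .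
  qed simp
qed

lemma conv_pow_mult_prod:
  "finite R \<Longrightarrow> conv_pow (\<lambda>K. c K * prod h K) l R = conv_pow c l R * prod h R"
proof (induction l arbitrary: R)
  case (Suc l)
  have "c K * prod h K * conv_pow (\<lambda>K. c K * prod h K) l (R - K) = c K * conv_pow c l (R - K) * prod h R"
    if "K \<subseteq> R" for K
    using that Suc prod.subset_diff[OF that Suc.prems, of h] by (simp add: algebra_simps)
  then show ?case by (simp add: sum_distrib_right)
qed simp

lemma conv_exp_mult_prod: "finite R \<Longrightarrow> conv_exp (\<lambda>K. c K * prod h K) R = conv_exp c R * prod h R"
  unfolding conv_exp_def sum_distrib_right by (simp add: conv_pow_mult_prod)

lemma sum_conv_exp_pivot_left:
  assumes R: "finite R" and v: "v \<in> R"
  shows "(\<Sum>S | S \<subseteq> R \<and> v \<in> S. conv_exp a S * g (R - S)) =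
    (\<Sum>K | K \<subseteq> R \<and> v \<in> K. a K * (\<Sum>S\<in>Pow (R - K). conv_exp a S * g (R - K - S)))"
proof -
  have "(\<Sum>S | S \<subseteq> R \<and> v \<in> S. conv_exp a S * g (R - S)) =
      (\<Sum>S | S \<subseteq> R \<and> v \<in> S. \<Sum>K | K \<subseteq> S \<and> v \<in> K. a K * conv_exp a (S - K) * g (R - S))"
  proof (intro sum.cong refl)
    fix S assume S: "S \<in> {S. S \<subseteq> R \<and> v \<in> S}"
    with R have "finite S" by (auto intro: finite_subset)
    with S show "conv_exp a S * g (R - S) = (\<Sum>K | K \<subseteq> S \<and> v \<in> K. a K * conv_exp a (S - K) * g (R - S))"
      by (simp add: conv_exp_pivot[where v = v] sum_distrib_right)
  qed
  also have "\<dots> = (\<Sum>K | K \<subseteq> R \<and> v \<in> K. \<Sum>S | K \<subseteq> S \<and> S \<subseteq> R. a K * conv_exp a (S - K) * g (R - S))"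
    by (rule sum_swap_dependent) (auto simp: R finite_subset[OF _ R])
  also have "\<dots> = (\<Sum>K | K \<subseteq> R \<and> v \<in> K. a K * (\<Sum>S\<in>Pow (R - K). conv_exp a S * g (R - K - S)))"
  proof (intro sum.cong refl)
    fix K assume "K \<in> {K. K \<subseteq> R \<and> v \<in> K}"
    then have "(\<Sum>S | K \<subseteq> S \<and> S \<subseteq> R. a K * conv_exp a (S - K) * g (R - S)) =
        (\<Sum>S\<in>Pow (R - K). a K * conv_exp a S * g (R - K - S))"
      by (intro sum.reindex_bij_witness[where j = "\<lambda>S. S - K" and i = "\<lambda>S. S \<union> K"])
        (auto intro!: arg_cong[where f = g])
    then show "(\<Sum>S | K \<subseteq> S \<and> S \<subseteq> R. a K * conv_exp a (S - K) * g (R - S)) =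
        a K * (\<Sum>S\<in>Pow (R - K). conv_exp a S * g (R - K - S))"
      by (simp add: sum_distrib_left algebra_simps)
  qed
  finally show ?thesis .
qed

lemma sum_conv_exp_pivot_right:
  assumes R: "finite R" and v: "v \<in> R"
  shows "(\<Sum>S | S \<subseteq> R \<and> v \<notin> S. f S * conv_exp b (R - S)) =
    (\<Sum>K | K \<subseteq> R \<and> v \<in> K. b K * (\<Sum>S\<in>Pow (R - K). f S * conv_exp b (R - K - S)))"
proof -
  have "(\<Sum>S | S \<subseteq> R \<and> v \<notin> S. f S * conv_exp b (R - S)) =
      (\<Sum>S | S \<subseteq> R \<and> v \<notin> S. \<Sum>K | K \<subseteq> R - S \<and> v \<in> K. b K * f S * conv_exp b (R - S - K))"
    using R v by (intro sum.cong refl) (auto simp: conv_exp_pivot[where v = v] sum_distrib_left algebra_simps)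
  also have "\<dots> = (\<Sum>K | K \<subseteq> R \<and> v \<in> K. \<Sum>S\<in>Pow (R - K). b K * f S * conv_exp b (R - S - K))"
    by (rule sum_swap_dependent) (use R in \<open>auto intro: finite_subset\<close>)
  also have "\<dots> = (\<Sum>K | K \<subseteq> R \<and> v \<in> K. b K * (\<Sum>S\<in>Pow (R - K). f S * conv_exp b (R - K - S)))"
    by (auto simp: sum_distrib_left algebra_simps Diff_eq Int_commute Int_left_commute intro!: sum.cong)
  finally show ?thesis .
qed

lemma conv_exp_add:
  "finite R \<Longrightarrow> conv_exp (\<lambda>K. a K + b K) R = (\<Sum>S\<in>Pow R. conv_exp a S * conv_exp b (R - S))"
proof (induction R rule: finite_psubset_induct)
  case (psubset R)
  show ?case
  proof (cases "R = {}")
    case False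
    then obtain v where v: "v \<in> R" by auto
    define X where "X K = (\<Sum>S\<in>Pow (R - K). conv_exp a S * conv_exp b (R - K - S))" for K
    have "Pow R = {S. S \<subseteq> R \<and> v \<in> S} \<union> {S. S \<subseteq> R \<and> v \<notin> S}" by auto
    then have "(\<Sum>S\<in>Pow R. conv_exp a S * conv_exp b (R - S)) =
        (\<Sum>S | S \<subseteq> R \<and> v \<in> S. conv_exp a S * conv_exp b (R - S)) +
        (\<Sum>S | S \<subseteq> R \<and> v \<notin> S. conv_exp a S * conv_exp b (R - S))"
      using psubset.hyps by (simp only:) (rule sum.union_disjoint, auto)
    also have "\<dots> = (\<Sum>K | K \<subseteq> R \<and> v \<in> K. (a K + b K) * X K)"
      unfolding sum_conv_exp_pivot_left[OF psubset.hyps v] sum_conv_exp_pivot_right[OF psubset.hyps v]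
      by (simp add: X_def sum.distrib algebra_simps)
    also have "\<dots> = (\<Sum>K | K \<subseteq> R \<and> v \<in> K. (a K + b K) * conv_exp (\<lambda>K. a K + b K) (R - K))"
    proof (intro sum.cong refl)
      fix K assume "K \<in> {K. K \<subseteq> R \<and> v \<in> K}"
      then have "R - K \<subset> R" by auto
      then show "(a K + b K) * X K = (a K + b K) * conv_exp (\<lambda>K. a K + b K) (R - K)"
        by (simp add: X_def psubset.IH)
    qed
    also have "\<dots> = conv_exp (\<lambda>K. a K + b K) R"
      by (rule conv_exp_pivot[OF psubset.hyps v, symmetric])
    finally show ?thesis ..
  qed simp
qed

lemma conv_pow_nonneg: "(\<And>K. 0 \<le> c K) \<Longrightarrow> 0 \<le> conv_pow (c :: 'a set \<Rightarrow> real) l R"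
  by (induction l arbitrary: R) (auto intro!: sum_nonneg)

lemma norm_conv_pow_le:
  fixes c :: "'a set \<Rightarrow> 'b::real_normed_field"
  shows "(\<And>K. K \<subseteq> R \<Longrightarrow> norm (c K) \<le> d K) \<Longrightarrow> norm (conv_pow c l R) \<le> conv_pow d l R"
proof (induction l arbitrary: R)
  case (Suc l)
  have "norm (c K * conv_pow c l (R - K)) \<le> d K * conv_pow d l (R - K)" if "K \<subseteq> R" for K
  proof -
    have "norm (conv_pow c l (R - K)) \<le> conv_pow d l (R - K)"
      using Suc that by (intro Suc.IH) auto
    with Suc.prems[OF that] show ?thesis
      unfolding norm_mult by (intro mult_mono) (auto intro: order_trans[OF norm_ge_zero])
  qed
  then have "norm (conv_pow c (Suc l) R) \<le> (\<Sum>K | K \<subseteq> R \<and> K \<noteq> {}. d K * conv_pow d l (R - K))"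
    unfolding conv_pow.simps by (intro order_trans[OF norm_sum] sum_mono) auto
  then show ?case by simp
qed simp

lemma norm_conv_exp_le:
  fixes c :: "'a set \<Rightarrow> 'b::{real_normed_field, field_char_0}"
  assumes "\<And>K. K \<subseteq> R \<Longrightarrow> norm (c K) \<le> d K"
  shows "norm (conv_exp c R) \<le> conv_exp d R"
  unfolding conv_exp_def
  by (intro order_trans[OF norm_sum] sum_mono)
    (simp add: norm_divide divide_right_mono norm_conv_pow_le[OF assms])

section \<open>Connected graphs with a distinguished root\<close>

definition edge :: "nat \<Rightarrow> nat \<Rightarrow> nat \<times> nat" where
  "edge i j = (min i j, max i j)"

lemma edge_commute: "edge i j = edge j i"
  by (simp add: edge_def min.commute max.commute)

lemma complete_edges_insert:
  assumes "r \<notin> R"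
  shows "complete_edges (insert r R) = complete_edges R \<union> edge r ` R"
proof (intro set_eqI iffI)
  fix p assume "p \<in> complete_edges (insert r R)"
  then obtain i j where p: "p = (i, j)" "i < j" "i \<in> insert r R" "j \<in> insert r R"
    by (auto simp: complete_edges_def)
  consider "i = r" "j \<in> R" | "j = r" "i \<in> R" | "i \<in> R" "j \<in> R"
    using p assms by auto
  then show "p \<in> complete_edges R \<union> edge r ` R"
  proof cases
    case 1 with p show ?thesis by (auto simp: edge_def intro!: image_eqI[of _ _ j])
  next
    case 2 with p show ?thesis by (auto simp: edge_def intro!: image_eqI[of _ _ i])
  next
    case 3 with p show ?thesis by (simp add: complete_edges_def)
  qed
next
  fix p assume "p \<in> complete_edges R \<union> edge r ` R"
  moreover have "edge r u \<in> complete_edges (insert r R)" if "u \<in> R" for u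
  proof -
    have "u \<noteq> r" using that assms by auto
    with that show ?thesis by (cases "r < u") (auto simp: complete_edges_def edge_def)
  qed
  ultimately show "p \<in> complete_edges (insert r R)"
    using complete_edges_mono[of R "insert r R"] by auto
qed

lemma graph_sum_insert:
  assumes R: "finite R" and r: "r \<notin> R"
  shows "graph_sum w (insert r R) = graph_sum w R * (\<Prod>u\<in>R. 1 + w (edge r u))"
proof -
  have "complete_edges R \<inter> edge r ` R = {}" "inj_on (edge r) R"
    using r by (auto simp: complete_edges_def edge_def min_def max_def inj_on_def split: if_splits)
  with R show ?thesis
    by (simp add: graph_sum_def complete_edges_insert[OF r] prod.union_disjoint prod.reindex)
qed

lemma graph_sum_insert_decompose:
  assumes R: "finite R" and r: "r \<notin> R"
  shows "graph_sum w (insert r R) = (\<Sum>S\<in>Pow R. conn_graph_sum w (insert r S) * graph_sum w (R - S))"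
proof -
  have "graph_sum w (insert r R) =
      (\<Sum>K | K \<subseteq> insert r R \<and> r \<in> K. conn_graph_sum w K * graph_sum w (insert r R - K))"
    using R by (intro graph_sum_decompose) auto
  also have "\<dots> = (\<Sum>S\<in>Pow R. conn_graph_sum w (insert r S) * graph_sum w (insert r R - insert r S))"
    using r by (intro sum.reindex_bij_witness[where i = "insert r" and j = "\<lambda>K. K - {r}"])
      (auto simp: insert_absorb)
  also have "\<dots> = (\<Sum>S\<in>Pow R. conn_graph_sum w (insert r S) * graph_sum w (R - S))"
    using r by (intro sum.cong refl) (auto intro!: arg_cong[where f = "graph_sum w"])
  finally show ?thesis .
qed

lemma conn_graph_sum_insert:
  fixes w :: "nat \<times> nat \<Rightarrow> 'b::field_char_0"
  assumes "finite R" "r \<notin> R"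
  shows "conn_graph_sum w (insert r R) =
    conv_exp (\<lambda>K. conn_graph_sum w K * ((\<Prod>u\<in>K. 1 + w (edge r u)) - 1)) R"
  using assms
proof (induction R rule: finite_psubset_induct)
  case (psubset R)
  \<comment> \<open>Both sides give the same expansion of graph_sum w (insert r R) over S \<subseteq> R; by induction
    the terms with S \<subset> R agree, which leaves the term S = R.\<close>
  define c where "c = (\<lambda>K. conn_graph_sum w K * ((\<Prod>u\<in>K. 1 + w (edge r u)) - 1))"
  have "graph_sum w (insert r R) = conv_exp (conn_graph_sum w) R * (\<Prod>u\<in>R. 1 + w (edge r u))"
    by (simp only: graph_sum_insert[OF psubset.hyps psubset.prems] graph_sum_eq_conv_exp[OF psubset.hyps])
  also have "\<dots> = conv_exp (\<lambda>K. c K + conn_graph_sum w K) R"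
    using psubset.hyps by (simp add: conv_exp_mult_prod[symmetric] c_def algebra_simps)
  also have "\<dots> = (\<Sum>S\<in>Pow R. conv_exp c S * graph_sum w (R - S))"
    using psubset.hyps by (simp add: conv_exp_add graph_sum_eq_conv_exp)
  finally have "(\<Sum>S\<in>Pow R. conn_graph_sum w (insert r S) * graph_sum w (R - S)) =
      (\<Sum>S\<in>Pow R. conv_exp c S * graph_sum w (R - S))"
    using graph_sum_insert_decompose[OF psubset.hyps psubset.prems, of w] by simp
  moreover have "(\<Sum>S\<in>Pow R - {R}. conn_graph_sum w (insert r S) * graph_sum w (R - S)) =
      (\<Sum>S\<in>Pow R - {R}. conv_exp c S * graph_sum w (R - S))"
  proof (intro sum.cong refl)
    fix S assume "S \<in> Pow R - {R}"
    then have "S \<subset> R" "r \<notin> S" using psubset.prems by auto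
    then show "conn_graph_sum w (insert r S) * graph_sum w (R - S) = conv_exp c S * graph_sum w (R - S)"
      by (simp add: psubset.IH c_def)
  qed
  ultimately show ?case
    using psubset.hyps by (simp add: sum.remove[of "Pow R" R] c_def)
qed

lemma norm_prod_one_add_minus_one_le:
  fixes z :: "'i \<Rightarrow> 'b::real_normed_field"
  assumes "\<And>u. u \<in> K \<Longrightarrow> norm (1 + z u) \<le> 1"
  shows "norm ((\<Prod>u\<in>K. 1 + z u) - 1) \<le> (\<Sum>u\<in>K. norm (z u))"
  using assms
proof (induction K rule: infinite_finite_induct)
  case (insert u K)
  have "(\<Prod>u\<in>insert u K. 1 + z u) - 1 = (1 + z u) * ((\<Prod>u\<in>K. 1 + z u) - 1) + z u"
    using insert by (simp add: algebra_simps)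
  also have "norm \<dots> \<le> norm (1 + z u) * norm ((\<Prod>u\<in>K. 1 + z u) - 1) + norm (z u)"
    by (metis norm_mult norm_triangle_ineq)
  also have "\<dots> \<le> (\<Sum>u\<in>K. norm (z u)) + norm (z u)"
    using insert mult_mono[OF insert.prems[of u] insert.IH] by (simp add: mult_left_le_one_le)
  finally show ?case using insert by (simp add: add.commute)
qed simp_all

section \<open>Relabelling vertices\<close>

definition map_graph :: "(nat \<Rightarrow> nat) \<Rightarrow> (nat \<times> nat) set \<Rightarrow> (nat \<times> nat) set" where
  "map_graph f G = (\<lambda>p. edge (f (fst p)) (f (snd p))) ` G"

lemma edge_eq_self: "i < j \<Longrightarrow> edge i j = (i, j)"
  by (simp add: edge_def)

lemma edge_eq_iff: "edge a b = edge c d \<longleftrightarrow> a = c \<and> b = d \<or> a = d \<and> b = c"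
  by (auto simp: edge_def min_def max_def)

lemma edge_map_edge: "edge (h (fst (edge a b))) (h (snd (edge a b))) = edge (h a) (h b)"
  by (cases "a \<le> b") (auto simp: edge_def min_def max_def)

lemma map_graph_comp: "map_graph g (map_graph f G) = map_graph (g \<circ> f) G"
  unfolding map_graph_def image_image by (simp add: edge_map_edge)

lemma map_graph_id_on:
  assumes "\<And>a. a \<in> V \<Longrightarrow> h a = a" "G \<subseteq> complete_edges V"
  shows "map_graph h G = G"
proof -
  have "edge (h i) (h j) = (i, j)" if "(i, j) \<in> G" for i j
    using that assms by (auto simp: complete_edges_def edge_eq_self)
  then show ?thesis unfolding map_graph_def by force
qed

lemma map_graph_subset:
  assumes "inj_on f I" "G \<subseteq> complete_edges I"
  shows "map_graph f G \<subseteq> complete_edges (f ` I)"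
proof
  fix e assume "e \<in> map_graph f G"
  then obtain i j where e: "e = edge (f i) (f j)" and "(i, j) \<in> G" by (auto simp: map_graph_def)
  with assms have "i \<in> I" "j \<in> I" "f i \<noteq> f j" by (auto simp: complete_edges_def dest: inj_onD)
  with e show "e \<in> complete_edges (f ` I)"
    by (auto simp: complete_edges_def edge_def min_def max_def)
qed

lemma map_graph_rtrancl:
  assumes "(i, j) \<in> (G \<union> G\<inverse>)\<^sup>*"
  shows "(f i, f j) \<in> (map_graph f G \<union> (map_graph f G)\<inverse>)\<^sup>*"
  using assms
proof (induction rule: rtrancl_induct)
  case (step y z)
  have "edge (f y) (f z) \<in> map_graph f G"
  proof (cases "(y, z) \<in> G")
    case False
    with step(2) have "(z, y) \<in> G" by auto
    then show ?thesis by (force simp: map_graph_def edge_commute)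
  qed (force simp: map_graph_def)
  then have "(f y, f z) \<in> map_graph f G \<union> (map_graph f G)\<inverse>"
    by (cases "f y \<le> f z") (auto simp: edge_def min_def max_def)
  with step(3) show ?case by (rule rtrancl_into_rtrancl)
qed simp

lemma connected_on_map_graph:
  assumes "inj_on f I" "connected_on I G"
  shows "connected_on (f ` I) (map_graph f G)"
  using assms map_graph_subset map_graph_rtrancl unfolding connected_on_def by blast

lemma bij_betw_map_graph:
  assumes inj: "inj_on f I"
  shows "bij_betw (map_graph f) {G. connected_on I G} {G. connected_on (f ` I) G}"
proof -
  define g where "g = the_inv_into I f"
  have gf: "g (f i) = i" if "i \<in> I" for i unfolding g_def using inj that by (rule the_inv_into_f_f)
  have fg: "f (g a) = a" if "a \<in> f ` I" for a unfolding g_def using inj that by (auto simp: the_inv_into_f_f)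
  have inj_g: "inj_on g (f ` I)" by (rule inj_on_inverseI[where g = f]) (use fg in auto)
  have gI: "g ` f ` I = I" by (simp add: image_image gf cong: image_cong)
  have "map_graph g (map_graph f G) = G \<and> connected_on (f ` I) (map_graph f G)"
    if G: "connected_on I G" for G
  proof
    show "map_graph g (map_graph f G) = G"
      unfolding map_graph_comp using G gf by (intro map_graph_id_on[where V = I]) (auto simp: connected_on_def)
  qed (rule connected_on_map_graph[OF inj G])
  moreover have "map_graph f (map_graph g G) = G \<and> connected_on I (map_graph g G)"
    if G: "connected_on (f ` I) G" for G
  proof
    show "map_graph f (map_graph g G) = G"
      unfolding map_graph_comp using G fg by (intro map_graph_id_on[where V = "f ` I"]) (auto simp: connected_on_def)
  qed (use connected_on_map_graph[OF inj_g G] gI in simp)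
  ultimately show ?thesis
    by (intro bij_betw_byWitness[where f' = "map_graph g"]) auto
qed

lemma prod_map_graph:
  fixes W :: "nat \<Rightarrow> nat \<Rightarrow> 'b::comm_monoid_mult"
  assumes inj: "inj_on f I" and G: "G \<subseteq> complete_edges I"
    and sym: "\<And>a b. a \<in> f ` I \<Longrightarrow> b \<in> f ` I \<Longrightarrow> W a b = W b a"
  shows "(\<Prod>p\<in>map_graph f G. W (fst p) (snd p)) = (\<Prod>p\<in>G. W (f (fst p)) (f (snd p)))"
proof -
  have inj_edge: "inj_on (\<lambda>p. edge (f (fst p)) (f (snd p))) G"
  proof (rule inj_onI)
    fix p q assume "p \<in> G" "q \<in> G" and eq: "edge (f (fst p)) (f (snd p)) = edge (f (fst q)) (f (snd q))"
    with G have "fst p < snd p" "fst q < snd q" "fst p \<in> I" "snd p \<in> I" "fst q \<in> I" "snd q \<in> I"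
      by (auto simp: complete_edges_def)
    with eq inj show "p = q"
      by (cases p, cases q) (auto simp: edge_eq_iff inj_on_eq_iff)
  qed
  have "W (fst (edge a b)) (snd (edge a b)) = W a b" if "a \<in> f ` I" "b \<in> f ` I" for a b
    using sym[OF that] by (simp add: edge_def min_def max_def)
  with G show ?thesis
    unfolding map_graph_def by (auto simp: prod.reindex[OF inj_edge] complete_edges_def intro!: prod.cong)
qed

lemma conn_graph_sum_reindex:
  fixes W :: "nat \<Rightarrow> nat \<Rightarrow> 'b::comm_ring_1"
  assumes inj: "inj_on f I" and sym: "\<And>a b. a \<in> f ` I \<Longrightarrow> b \<in> f ` I \<Longrightarrow> W a b = W b a"
  shows "conn_graph_sum (\<lambda>p. W (fst p) (snd p)) (f ` I) = conn_graph_sum (\<lambda>p. W (f (fst p)) (f (snd p))) I"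
proof -
  have "conn_graph_sum (\<lambda>p. W (fst p) (snd p)) (f ` I) =
      (\<Sum>G | connected_on I G. \<Prod>p\<in>map_graph f G. W (fst p) (snd p))"
    unfolding conn_graph_sum_def by (rule sum.reindex_bij_betw[OF bij_betw_map_graph[OF inj], symmetric])
  also have "\<dots> = conn_graph_sum (\<lambda>p. W (f (fst p)) (f (snd p))) I"
    unfolding conn_graph_sum_def
  proof (intro sum.cong refl)
    fix G assume "G \<in> {G. connected_on I G}"
    then have "G \<subseteq> complete_edges I" by (simp add: connected_on_def)
    then show "(\<Prod>p\<in>map_graph f G. W (fst p) (snd p)) = (\<Prod>p\<in>G. W (f (fst p)) (f (snd p)))"
      by (rule prod_map_graph[OF inj _ sym])
  qed
  finally show ?thesis .
qed

lemma conn_graph_sum_cong: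
  "(\<And>e. e \<in> complete_edges K \<Longrightarrow> w e = w' e) \<Longrightarrow> conn_graph_sum w K = conn_graph_sum w' K"
  unfolding conn_graph_sum_def connected_on_def by (intro sum.cong refl prod.cong) auto

section \<open>Coefficients of power series\<close>

text \<open>cauchy_pow t l m is the coefficient of z^m in (\<Sum>k\<ge>1. t k z^k)^l, and exp_coeff t m
  the coefficient of z^m in the exponential of that series.\<close>

fun cauchy_pow :: "(nat \<Rightarrow> ennreal) \<Rightarrow> nat \<Rightarrow> nat \<Rightarrow> ennreal" where
  "cauchy_pow t 0 m = (if m = 0 then 1 else 0)"
| "cauchy_pow t (Suc l) m = (\<Sum>k\<in>{1..m}. t k * cauchy_pow t l (m - k))"

definition exp_coeff :: "(nat \<Rightarrow> ennreal) \<Rightarrow> nat \<Rightarrow> ennreal" where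
  "exp_coeff t m = (\<Sum>l\<le>m. cauchy_pow t l m * ennreal (1 / fact l))"

lemma sum_cauchy_product_le:
  fixes f :: "nat \<Rightarrow> nat \<Rightarrow> ennreal"
  shows "(\<Sum>m\<le>N. \<Sum>k\<in>{1..m}. f k (m - k)) \<le> (\<Sum>k\<in>{1..N}. \<Sum>j\<le>N. f k j)"
proof -
  let ?S = "SIGMA m:{..N}. {1..m}"
  have "inj_on (\<lambda>(m, k). (k, m - k)) ?S" by (auto simp: inj_on_def)
  then have "(\<Sum>m\<le>N. \<Sum>k\<in>{1..m}. f k (m - k)) = (\<Sum>(k, j)\<in>(\<lambda>(m, k). (k, m - k)) ` ?S. f k j)"
    by (simp add: sum.Sigma sum.reindex case_prod_unfold)
  also have "\<dots> \<le> (\<Sum>(k, j)\<in>{1..N} \<times> {..N}. f k j)"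
    by (rule sum_mono2) auto
  finally show ?thesis by (simp add: sum.cartesian_product)
qed

lemma sum_cauchy_pow_le: "(\<Sum>m\<le>N. cauchy_pow t l m) \<le> (\<Sum>k\<in>{1..N}. t k) ^ l"
proof (induction l)
  case 0
  show ?case by (simp add: sum.delta)
next
  case (Suc l)
  have "(\<Sum>m\<le>N. cauchy_pow t (Suc l) m) \<le> (\<Sum>k\<in>{1..N}. t k) * (\<Sum>j\<le>N. cauchy_pow t l j)"
    using sum_cauchy_product_le[of "\<lambda>k j. t k * cauchy_pow t l j" N] by (simp add: sum_product)
  also have "\<dots> \<le> (\<Sum>k\<in>{1..N}. t k) * (\<Sum>k\<in>{1..N}. t k) ^ l"
    by (intro mult_left_mono Suc.IH) auto
  finally show ?case by simp
qed

lemma sum_power_div_fact_le_exp: "0 \<le> (x::real) \<Longrightarrow> (\<Sum>l\<le>N. x ^ l / fact l) \<le> exp x"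
  using exp_converges[of x] sum_le_suminf[of "\<lambda>l. x ^ l / fact l" "{..N}"]
  by (simp add: sums_iff divide_inverse_commute scaleR_conv_of_real)

lemma sum_exp_coeff_le_exp:
  assumes "(\<Sum>k\<in>{1..N}. t k) \<le> ennreal x" "0 \<le> x"
  shows "(\<Sum>m\<le>N. exp_coeff t m) \<le> ennreal (exp x)"
proof -
  have "(\<Sum>m\<le>N. exp_coeff t m) \<le> (\<Sum>m\<le>N. \<Sum>l\<le>N. cauchy_pow t l m * ennreal (1 / fact l))"
    unfolding exp_coeff_def by (intro sum_mono sum_mono2) auto
  also have "\<dots> = (\<Sum>l\<le>N. (\<Sum>m\<le>N. cauchy_pow t l m) * ennreal (1 / fact l))"
    by (subst sum.swap) (simp add: sum_distrib_right)
  also have "\<dots> \<le> (\<Sum>l\<le>N. ennreal x ^ l * ennreal (1 / fact l))"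
    using assms(1) by (intro sum_mono mult_right_mono order_trans[OF sum_cauchy_pow_le] power_mono) auto
  also have "\<dots> = ennreal (\<Sum>l\<le>N. x ^ l / fact l)"
    using assms(2) by (simp add: ennreal_power ennreal_mult''[symmetric] sum_ennreal divide_inverse)
  also have "\<dots> \<le> ennreal (exp x)"
    using assms(2) by (intro ennreal_leI sum_power_div_fact_le_exp)
  finally show ?thesis .
qed

lemma sum_nonempty_subsets_card:
  fixes h :: "nat \<Rightarrow> 'b::comm_semiring_1"
  assumes R: "finite R"
  shows "(\<Sum>K | K \<subseteq> R \<and> K \<noteq> {}. h (card K)) = (\<Sum>k\<in>{1..card R}. of_nat (card R choose k) * h k)"
proof -
  have "card ` {K. K \<subseteq> R \<and> K \<noteq> {}} \<subseteq> {1..card R}"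
    using R by (auto simp: card_mono Suc_le_eq card_gt_0_iff dest: finite_subset)
  then have "(\<Sum>K | K \<subseteq> R \<and> K \<noteq> {}. h (card K)) =
      (\<Sum>k\<in>{1..card R}. \<Sum>K | K \<in> {K. K \<subseteq> R \<and> K \<noteq> {}} \<and> card K = k. h (card K))"
    using R by (intro sum.group[symmetric]) auto
  also have "\<dots> = (\<Sum>k\<in>{1..card R}. \<Sum>K | K \<subseteq> R \<and> card K = k. h k)"
    by (intro sum.cong refl arg_cong2[where f = sum]) auto
  also have "\<dots> = (\<Sum>k\<in>{1..card R}. of_nat (card R choose k) * h k)"
    using n_subsets[OF R] by simp
  finally show ?thesis .
qed

lemma sum_binomial_fact_mult:
  fixes f g :: "nat \<Rightarrow> ennreal"
  shows "(\<Sum>k\<in>{1..m}. of_nat (m choose k) * (ennreal (fact k) * f k * (ennreal (fact (m - k)) * g (m - k)))) =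
    ennreal (fact m) * (\<Sum>k\<in>{1..m}. f k * g (m - k))"
  unfolding sum_distrib_left
proof (intro sum.cong refl)
  fix k assume "k \<in> {1..m}"
  have "of_nat (m choose k) * (ennreal (fact k) * f k * (ennreal (fact (m - k)) * g (m - k))) =
      of_nat (m choose k) * (ennreal (fact k) * ennreal (fact (m - k))) * (f k * g (m - k))"
    by (simp add: mult_ac)
  also have "of_nat (m choose k) * (ennreal (fact k) * ennreal (fact (m - k))) = ennreal (fact m)"
    using \<open>k \<in> {1..m}\<close> arg_cong[OF binomial_fact_lemma[of k m], of real]
    by (simp add: ennreal_of_nat_eq_real_of_nat ennreal_mult[symmetric] mult_ac)
  finally show "of_nat (m choose k) * (ennreal (fact k) * f k * (ennreal (fact (m - k)) * g (m - k))) =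
      ennreal (fact m) * (f k * g (m - k))" .
qed

lemma borel_measurable_cauchy_pow [measurable]:
  assumes [measurable]: "\<And>k. (\<lambda>y. t k y) \<in> borel_measurable M"
  shows "(\<lambda>y. cauchy_pow (\<lambda>k. t k y) l m) \<in> borel_measurable M"
  by (induction l arbitrary: m) simp_all

lemma borel_measurable_exp_coeff [measurable]:
  "(\<And>k. (\<lambda>y. t k y) \<in> borel_measurable M) \<Longrightarrow> (\<lambda>y. exp_coeff (\<lambda>k. t k y) m) \<in> borel_measurable M"
  unfolding exp_coeff_def by (intro borel_measurable_sum borel_measurable_times_ennreal) auto

section \<open>Integrating over the points of a polymer system\<close>

lemma (in product_sigma_finite) distr_PiM_bij_betw:
  assumes bij: "bij_betw f I K" and "finite I"
  shows "distr (Pi\<^sub>M I (\<lambda>i. M (f i))) (Pi\<^sub>M K M) (\<lambda>x. \<lambda>k\<in>K. x (the_inv_into I f k)) = Pi\<^sub>M K M"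
proof -
  interpret MF: product_sigma_finite "\<lambda>i. M (f i)"
    by (simp add: product_sigma_finite_def sigma_finite_measures)
  define g where "g = the_inv_into I f"
  have fI: "f ` I = K" "inj_on f I" and "finite K" using bij assms(2) by (auto simp: bij_betw_def)
  have gf: "g (f i) = i" if "i \<in> I" for i unfolding g_def using fI that by (simp add: the_inv_into_f_f)
  have fg: "f (g k) = k" and gK: "g k \<in> I" if "k \<in> K" for k
    unfolding g_def using fI that by (auto simp: the_inv_into_f_f the_inv_into_into)
  have meas: "(\<lambda>x. \<lambda>k\<in>K. x (g k)) \<in> measurable (Pi\<^sub>M I (\<lambda>i. M (f i))) (Pi\<^sub>M K M)"
    using fg gK by (intro measurable_restrict) (metis measurable_component_singleton)
  show ?thesis unfolding g_def[symmetric]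
  proof (rule PiM_eqI[OF \<open>finite K\<close>])
    fix A assume A: "\<And>k. k \<in> K \<Longrightarrow> A k \<in> sets (M k)"
    have "(\<lambda>x. \<lambda>k\<in>K. x (g k)) -` Pi\<^sub>E K A \<inter> space (Pi\<^sub>M I (\<lambda>i. M (f i))) = Pi\<^sub>E I (\<lambda>i. A (f i))"
      using A[THEN sets.sets_into_space] fI gf fg gK
      by (auto simp: space_PiM PiE_iff Pi_iff) blast+
    moreover have "emeasure (Pi\<^sub>M I (\<lambda>i. M (f i))) (Pi\<^sub>E I (\<lambda>i. A (f i))) = (\<Prod>i\<in>I. emeasure (M (f i)) (A (f i)))"
      using A fI assms(2) by (intro MF.emeasure_PiM) auto
    moreover have "(\<Prod>i\<in>I. emeasure (M (f i)) (A (f i))) = (\<Prod>k\<in>K. emeasure (M k) (A k))"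
      using bij by (rule prod.reindex_bij_betw)
    ultimately show "emeasure (distr (Pi\<^sub>M I (\<lambda>i. M (f i))) (Pi\<^sub>M K M) (\<lambda>x. \<lambda>k\<in>K. x (g k))) (Pi\<^sub>E K A) =
        (\<Prod>k\<in>K. emeasure (M k) (A k))"
      using A meas fI assms(2)
      by (simp add: emeasure_distr sets_PiM_I_finite \<open>finite K\<close>)
  qed simp
qed

locale polymer_system =
  fixes M :: "'a measure" and \<zeta> :: "'a \<Rightarrow> 'a \<Rightarrow> complex"
  assumes finite_M: "finite_measure M"
    and zeta_measurable: "(\<lambda>p. \<zeta> (fst p) (snd p)) \<in> borel_measurable (M \<Otimes>\<^sub>M M)"
    and zeta_commute: "\<And>x y. x \<in> space M \<Longrightarrow> y \<in> space M \<Longrightarrow> \<zeta> x y = \<zeta> y x"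
    and norm_one_add_zeta_le: "\<And>x y. x \<in> space M \<Longrightarrow> y \<in> space M \<Longrightarrow> cmod (1 + \<zeta> x y) \<le> 1"
begin

sublocale P: product_sigma_finite "\<lambda>_::nat. M"
  using finite_M by (simp add: product_sigma_finite_def finite_measure_def)

abbreviation PM :: "nat set \<Rightarrow> (nat \<Rightarrow> 'a) measure" where
  "PM J \<equiv> Pi\<^sub>M J (\<lambda>_. M)"

definition ursell_sum :: "nat set \<Rightarrow> (nat \<Rightarrow> 'a) \<Rightarrow> complex" where
  "ursell_sum K x = conn_graph_sum (\<lambda>p. \<zeta> (x (fst p)) (x (snd p))) K"

definition root_weight :: "'a \<Rightarrow> (nat \<Rightarrow> 'a) \<Rightarrow> nat set \<Rightarrow> real" where
  "root_weight y x K = (\<Sum>u\<in>K. cmod (\<zeta> y (x u))) * cmod (ursell_sum K x)"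

definition cluster_integral :: "nat set \<Rightarrow> 'a \<Rightarrow> ennreal" where
  "cluster_integral K y = (\<integral>\<^sup>+x. ennreal (root_weight y x K) \<partial>PM K)"

text \<open>cluster_term (Suc n) A is the n-th summand of the series in the theorem
  (see nn_integral_ursell_eq_cluster_term).\<close>
definition cluster_term :: "nat \<Rightarrow> 'a \<Rightarrow> ennreal" where
  "cluster_term k y = ennreal (1 / fact k) * cluster_integral {..<k} y"

lemma root_weight_nonneg: "0 \<le> root_weight y x K"
  unfolding root_weight_def by (intro mult_nonneg_nonneg sum_nonneg) auto

lemma ursell_sum_cong: "(\<And>i. i \<in> K \<Longrightarrow> x i = x' i) \<Longrightarrow> ursell_sum K x = ursell_sum K x'"
  unfolding ursell_sum_def by (rule conn_graph_sum_cong) (auto simp: complete_edges_def)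

lemma root_weight_cong: "(\<And>i. i \<in> K \<Longrightarrow> x i = x' i) \<Longrightarrow> root_weight y x K = root_weight y x' K"
  unfolding root_weight_def using ursell_sum_cong[of K x x'] by simp

lemma conv_pow_root_weight_cong:
  "(\<And>i. i \<in> R \<Longrightarrow> x i = x' i) \<Longrightarrow> conv_pow (root_weight y x) l R = conv_pow (root_weight y x') l R"
  by (intro conv_pow_cong root_weight_cong) auto

lemma root_weight_reindex:
  assumes inj: "inj_on f I" and x': "\<And>i. i \<in> I \<Longrightarrow> x' (f i) = x i"
    and x: "\<And>i. i \<in> I \<Longrightarrow> x i \<in> space M"
  shows "root_weight y x' (f ` I) = root_weight y x I"
proof -
  have "ursell_sum (f ` I) x' = conn_graph_sum (\<lambda>p. \<zeta> (x' (f (fst p))) (x' (f (snd p)))) I"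
    unfolding ursell_sum_def using x x' by (intro conn_graph_sum_reindex[OF inj] zeta_commute) auto
  also have "\<dots> = ursell_sum I x"
    unfolding ursell_sum_def using x' by (intro conn_graph_sum_cong) (auto simp: complete_edges_def)
  finally show ?thesis
    using x' by (simp add: root_weight_def sum.reindex[OF inj])
qed

lemma measurable_zeta_pair:
  assumes "i \<in> J" "j \<in> J"
  shows "(\<lambda>x. \<zeta> (x i) (x j)) \<in> borel_measurable (PM J)"
proof -
  have "(\<lambda>x. (x i, x j)) \<in> measurable (PM J) (M \<Otimes>\<^sub>M M)"
    using assms by (intro measurable_Pair) (auto intro: measurable_component_singleton)
  from measurable_compose[OF this zeta_measurable] show ?thesis by simp
qed

lemma measurable_zeta_left: "y \<in> space M \<Longrightarrow> (\<lambda>z. \<zeta> y z) \<in> borel_measurable M"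
  using measurable_Pair2[OF zeta_measurable] by simp

lemma measurable_zeta_component:
  assumes "y \<in> space M" "i \<in> J"
  shows "(\<lambda>x. \<zeta> y (x i)) \<in> borel_measurable (PM J)"
  using measurable_compose[OF measurable_component_singleton[OF assms(2)] measurable_zeta_left[OF assms(1)]] .

lemma measurable_ursell_sum:
  assumes "K \<subseteq> J" "finite K"
  shows "ursell_sum K \<in> borel_measurable (PM J)"
  unfolding ursell_sum_def[abs_def] conn_graph_sum_def
proof (intro borel_measurable_sum borel_measurable_prod)
  fix G e assume "G \<in> {G. connected_on K G}" "e \<in> G"
  then show "(\<lambda>x. \<zeta> (x (fst e)) (x (snd e))) \<in> borel_measurable (PM J)"
    using assms by (intro measurable_zeta_pair) (cases e, auto simp: connected_on_def complete_edges_def)+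
qed

lemma measurable_root_weight:
  assumes "K \<subseteq> J" "finite K" "y \<in> space M"
  shows "(\<lambda>x. root_weight y x K) \<in> borel_measurable (PM J)"
  unfolding root_weight_def
proof (intro borel_measurable_times borel_measurable_sum)
  show "(\<lambda>x. cmod (ursell_sum K x)) \<in> borel_measurable (PM J)"
    using measurable_ursell_sum[OF assms(1,2)] by measurable
  fix u assume "u \<in> K"
  with assms show "(\<lambda>x. cmod (\<zeta> y (x u))) \<in> borel_measurable (PM J)"
    using measurable_zeta_component[of y u J] by auto
qed

lemma measurable_conv_pow_root_weight:
  assumes "R \<subseteq> J" "finite R" "y \<in> space M"
  shows "(\<lambda>x. conv_pow (root_weight y x) l R) \<in> borel_measurable (PM J)"
  using assms(1,2)
proof (induction l arbitrary: R)
  case (Suc l)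
  then show ?case unfolding conv_pow.simps
    using assms(3) by (intro borel_measurable_sum borel_measurable_times measurable_root_weight Suc.IH)
      (auto intro: finite_subset)
qed simp

lemma measurable_conv_exp_root_weight:
  "R \<subseteq> J \<Longrightarrow> finite R \<Longrightarrow> y \<in> space M \<Longrightarrow> (\<lambda>x. conv_exp (root_weight y x) R) \<in> borel_measurable (PM J)"
  unfolding conv_exp_def by (intro borel_measurable_sum borel_measurable_divide measurable_conv_pow_root_weight) auto

lemma measurable_cluster_integral:
  assumes "finite K"
  shows "cluster_integral K \<in> borel_measurable M"
proof -
  interpret F: finite_product_sigma_finite "\<lambda>_. M" K
    using assms by unfold_locales
  have "(\<lambda>p. \<zeta> (fst p) (snd p i)) \<in> borel_measurable (M \<Otimes>\<^sub>M PM K)" if "i \<in> K" for i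
    using measurable_compose[OF measurable_Pair[OF measurable_fst
          measurable_compose[OF measurable_snd measurable_component_singleton[OF that]]] zeta_measurable]
    by simp
  moreover have "(\<lambda>p. ursell_sum K (snd p)) \<in> borel_measurable (M \<Otimes>\<^sub>M PM K)"
    using assms by (intro measurable_compose[OF measurable_snd measurable_ursell_sum]) auto
  ultimately have "(\<lambda>(y, x). ennreal (root_weight y x K)) \<in> borel_measurable (M \<Otimes>\<^sub>M PM K)"
    unfolding root_weight_def case_prod_beta by measurable
  then show ?thesis
    unfolding cluster_integral_def[abs_def] by (rule F.borel_measurable_nn_integral)
qed

lemma measurable_cluster_term [measurable]: "(\<lambda>y. cluster_term k y) \<in> borel_measurable M"
  unfolding cluster_term_def using measurable_cluster_integral[of "{..<k}"] by measurable

lemma cluster_integral_relabel: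
  assumes K: "finite K" and y: "y \<in> space M"
  shows "cluster_integral K y = cluster_integral {..<card K} y"
proof -
  define I where "I = {..<card K}"
  obtain f where bij: "bij_betw f I K"
    using ex_bij_betw_nat_finite[OF K] by (auto simp: I_def atLeast0LessThan)
  define g where "g = the_inv_into I f"
  have inj: "inj_on f I" and fI: "f ` I = K" using bij by (auto simp: bij_betw_def)
  have gK: "g k \<in> I" if "k \<in> K" for k using that fI inj by (auto simp: g_def the_inv_into_into)
  have gf: "g (f i) = i" if "i \<in> I" for i using that inj by (simp add: g_def the_inv_into_f_f)
  have meas: "(\<lambda>x. \<lambda>k\<in>K. x (g k)) \<in> measurable (PM I) (PM K)"
    using gK by (intro measurable_restrict measurable_component_singleton)
  have "cluster_integral K y = (\<integral>\<^sup>+x. ennreal (root_weight y x K) \<partial>distr (PM I) (PM K) (\<lambda>x. \<lambda>k\<in>K. x (g k)))"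
    using P.distr_PiM_bij_betw[OF bij] by (simp add: cluster_integral_def g_def I_def)
  also have "\<dots> = (\<integral>\<^sup>+x. ennreal (root_weight y (\<lambda>k\<in>K. x (g k)) K) \<partial>PM I)"
    by (intro nn_integral_distr meas) (use measurable_root_weight[OF subset_refl K y] in measurable)
  also have "\<dots> = cluster_integral {..<card K} y"
    unfolding cluster_integral_def I_def[symmetric]
  proof (intro nn_integral_cong arg_cong[where f = ennreal])
    fix x assume "x \<in> space (PM I)"
    then show "root_weight y (\<lambda>k\<in>K. x (g k)) K = root_weight y x I"
      unfolding fI[symmetric] using gf fI by (intro root_weight_reindex[OF inj]) (auto simp: space_PiM)
  qed
  finally show ?thesis .
qed

lemma fact_mult_cluster_term: "ennreal (fact k) * cluster_term k y = cluster_integral {..<k} y"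
  unfolding cluster_term_def
  by (simp add: mult.assoc[symmetric] ennreal_mult[symmetric] del: ennreal_mult')

lemma measurable_root_weight_mult_conv_pow:
  assumes "K \<subseteq> R" "finite R" "y \<in> space M"
  shows "(\<lambda>x. ennreal (root_weight y x K * conv_pow (root_weight y x) l (R - K))) \<in> borel_measurable (PM R)"
  using assms measurable_root_weight[of K R y] measurable_conv_pow_root_weight[of "R - K" R y l]
  by (simp add: finite_subset)

lemma nn_integral_root_weight_mult_conv_pow:
  assumes R: "finite R" and K: "K \<subseteq> R" and y: "y \<in> space M"
  shows "(\<integral>\<^sup>+x. ennreal (root_weight y x K * conv_pow (root_weight y x) l (R - K)) \<partial>PM R)
       = cluster_integral K y * (\<integral>\<^sup>+x. ennreal (conv_pow (root_weight y x) l (R - K)) \<partial>PM (R - K))"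
proof -
  have fK: "finite K" and fJ: "finite (R - K)" using R K finite_subset by auto
  let ?f = "\<lambda>x. ennreal (root_weight y x K * conv_pow (root_weight y x) l (R - K))"
  have KR: "K \<union> (R - K) = R" using K by auto
  have "?f \<in> borel_measurable (PM (K \<union> (R - K)))"
    unfolding KR by (rule measurable_root_weight_mult_conv_pow[OF K R y])
  then have "(\<integral>\<^sup>+x. ?f x \<partial>PM (K \<union> (R - K))) =
      (\<integral>\<^sup>+u. (\<integral>\<^sup>+v. ?f (merge K (R - K) (u, v)) \<partial>PM (R - K)) \<partial>PM K)"
    using fK fJ by (intro P.product_nn_integral_fold) auto
  then have "(\<integral>\<^sup>+x. ?f x \<partial>PM R) = (\<integral>\<^sup>+u. (\<integral>\<^sup>+v. ?f (merge K (R - K) (u, v)) \<partial>PM (R - K)) \<partial>PM K)"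
    by (simp only: KR)
  also have "\<dots> = (\<integral>\<^sup>+u. ennreal (root_weight y u K) * (\<integral>\<^sup>+v. ennreal (conv_pow (root_weight y v) l (R - K)) \<partial>PM (R - K)) \<partial>PM K)"
  proof (intro nn_integral_cong, subst nn_integral_cmult[symmetric])
    show "(\<lambda>v. ennreal (conv_pow (root_weight y v) l (R - K))) \<in> borel_measurable (PM (R - K))"
      using measurable_conv_pow_root_weight[OF subset_refl fJ y] by measurable
    fix u
    have "root_weight y (merge K (R - K) (u, v)) K = root_weight y u K"
      "conv_pow (root_weight y (merge K (R - K) (u, v))) l (R - K) = conv_pow (root_weight y v) l (R - K)" for v
      by (auto intro!: root_weight_cong conv_pow_root_weight_cong simp: merge_def)
    then show "(\<integral>\<^sup>+v. ?f (merge K (R - K) (u, v)) \<partial>PM (R - K)) =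
        (\<integral>\<^sup>+v. ennreal (root_weight y u K) * ennreal (conv_pow (root_weight y v) l (R - K)) \<partial>PM (R - K))"
      by (simp add: ennreal_mult root_weight_nonneg conv_pow_nonneg)
  qed
  also have "\<dots> = cluster_integral K y * (\<integral>\<^sup>+v. ennreal (conv_pow (root_weight y v) l (R - K)) \<partial>PM (R - K))"
    unfolding cluster_integral_def using measurable_root_weight[OF subset_refl fK y]
    by (intro nn_integral_multc) measurable
  finally show ?thesis .
qed

lemma nn_integral_conv_pow_root_weight:
  assumes "finite R" and y: "y \<in> space M"
  shows "(\<integral>\<^sup>+x. ennreal (conv_pow (root_weight y x) l R) \<partial>PM R) =
    ennreal (fact (card R)) * cauchy_pow (\<lambda>k. cluster_term k y) l (card R)"
  using assms(1)
proof (induction l arbitrary: R)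
  case 0
  then show ?case by (simp add: PiM_empty emeasure_count_space_finite)
next
  case (Suc l)
  let ?m = "card R"
  define h where "h k = ennreal (fact k) * cluster_term k y *
    (ennreal (fact (?m - k)) * cauchy_pow (\<lambda>k. cluster_term k y) l (?m - k))" for k
  have block_integral: "(\<integral>\<^sup>+x. ennreal (root_weight y x K * conv_pow (root_weight y x) l (R - K)) \<partial>PM R) = h (card K)"
    if K: "K \<subseteq> R" for K
  proof -
    have fK: "finite K" using K Suc.prems finite_subset by auto
    have CI: "cluster_integral K y = ennreal (fact (card K)) * cluster_term (card K) y"
      by (simp only: cluster_integral_relabel[OF fK y] fact_mult_cluster_term)
    have "card (R - K) = ?m - card K" using K fK by (simp add: card_Diff_subset)
    with CI Suc.IH[of "R - K"] Suc.prems show ?thesis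
      unfolding nn_integral_root_weight_mult_conv_pow[OF Suc.prems K y] h_def by (simp add: mult.assoc)
  qed
  have "(\<integral>\<^sup>+x. ennreal (conv_pow (root_weight y x) (Suc l) R) \<partial>PM R) =
      (\<integral>\<^sup>+x. (\<Sum>K | K \<subseteq> R \<and> K \<noteq> {}. ennreal (root_weight y x K * conv_pow (root_weight y x) l (R - K))) \<partial>PM R)"
    by (intro nn_integral_cong) (simp add: sum_ennreal root_weight_nonneg conv_pow_nonneg)
  also have "\<dots> = (\<Sum>K | K \<subseteq> R \<and> K \<noteq> {}. h (card K))"
    using Suc.prems y by (subst nn_integral_sum) (simp_all add: measurable_root_weight_mult_conv_pow block_integral)
  also have "\<dots> = (\<Sum>k\<in>{1..?m}. of_nat (?m choose k) * h k)"
    by (rule sum_nonempty_subsets_card[OF Suc.prems])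
  also have "\<dots> = ennreal (fact ?m) * cauchy_pow (\<lambda>k. cluster_term k y) (Suc l) ?m"
    unfolding h_def cauchy_pow.simps by (rule sum_binomial_fact_mult)
  finally show ?case .
qed

lemma nn_integral_conv_exp_root_weight:
  assumes R: "finite R" and y: "y \<in> space M"
  shows "(\<integral>\<^sup>+x. ennreal (conv_exp (root_weight y x) R) \<partial>PM R) =
    ennreal (fact (card R)) * exp_coeff (\<lambda>k. cluster_term k y) (card R)"
proof -
  have "(\<integral>\<^sup>+x. ennreal (conv_exp (root_weight y x) R) \<partial>PM R) =
      (\<integral>\<^sup>+x. (\<Sum>l\<le>card R. ennreal (conv_pow (root_weight y x) l R) * ennreal (1 / fact l)) \<partial>PM R)"
  proof (intro nn_integral_cong)
    fix x
    have nonneg: "0 \<le> conv_pow (root_weight y x) l R" for l by (intro conv_pow_nonneg root_weight_nonneg)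
    then have "ennreal (conv_exp (root_weight y x) R) = (\<Sum>l\<le>card R. ennreal (conv_pow (root_weight y x) l R / fact l))"
      unfolding conv_exp_def by (subst sum_ennreal) auto
    also have "\<dots> = (\<Sum>l\<le>card R. ennreal (conv_pow (root_weight y x) l R) * ennreal (1 / fact l))"
      using ennreal_mult'[OF nonneg, of _ "1 / fact _"] by (intro sum.cong refl) simp
    finally show "ennreal (conv_exp (root_weight y x) R) =
        (\<Sum>l\<le>card R. ennreal (conv_pow (root_weight y x) l R) * ennreal (1 / fact l))" .
  qed
  also have "\<dots> = (\<Sum>l\<le>card R. (\<integral>\<^sup>+x. ennreal (conv_pow (root_weight y x) l R) \<partial>PM R) * ennreal (1 / fact l))"
    using measurable_conv_pow_root_weight[OF subset_refl R y]
    by (simp add: nn_integral_sum nn_integral_multc)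
  also have "\<dots> = ennreal (fact (card R)) * exp_coeff (\<lambda>k. cluster_term k y) (card R)"
    by (simp add: nn_integral_conv_pow_root_weight R y exp_coeff_def sum_distrib_left mult.assoc)
  finally show ?thesis .
qed

lemma zeta_edge_update:
  assumes "u \<noteq> i" "x u \<in> space M" "y \<in> space M"
  shows "\<zeta> ((x(i := y)) (fst (edge i u))) ((x(i := y)) (snd (edge i u))) = \<zeta> y (x u)"
  using assms zeta_commute[of "x u" y] by (cases "i < u") (auto simp: edge_def)

lemma norm_ursell_sum_insert_le:
  assumes R: "finite R" and i: "i \<notin> R" and x: "x \<in> space (PM R)" and y: "y \<in> space M"
  shows "cmod (ursell_sum (insert i R) (x(i := y))) \<le> conv_exp (root_weight y x) R"
proof -
  define w where "w = (\<lambda>p. \<zeta> ((x(i := y)) (fst p)) ((x(i := y)) (snd p)))"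
  have xM: "x u \<in> space M" if "u \<in> R" for u using x that by (auto simp: space_PiM)
  have "ursell_sum (insert i R) (x(i := y)) = conv_exp (\<lambda>K. conn_graph_sum w K * ((\<Prod>u\<in>K. 1 + w (edge i u)) - 1)) R"
    unfolding ursell_sum_def w_def by (rule conn_graph_sum_insert[OF R i])
  also have "cmod \<dots> \<le> conv_exp (root_weight y x) R"
  proof (rule norm_conv_exp_le)
    fix K assume K: "K \<subseteq> R"
    with i have "conn_graph_sum w K = ursell_sum K x"
      unfolding w_def ursell_sum_def by (intro conn_graph_sum_cong) (auto simp: complete_edges_def)
    moreover have "(\<Prod>u\<in>K. 1 + w (edge i u)) = (\<Prod>u\<in>K. 1 + \<zeta> y (x u))"
    proof (intro prod.cong refl)
      fix u assume "u \<in> K"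
      with K i xM have "u \<noteq> i" "x u \<in> space M" by auto
      then show "1 + w (edge i u) = 1 + \<zeta> y (x u)"
        by (simp add: w_def zeta_edge_update[OF _ _ y] del: fun_upd_apply)
    qed
    moreover have "cmod ((\<Prod>u\<in>K. 1 + \<zeta> y (x u)) - 1) \<le> (\<Sum>u\<in>K. cmod (\<zeta> y (x u)))"
      using K xM y by (intro norm_prod_one_add_minus_one_le norm_one_add_zeta_le) auto
    ultimately show "cmod (conn_graph_sum w K * ((\<Prod>u\<in>K. 1 + w (edge i u)) - 1)) \<le> root_weight y x K"
      unfolding root_weight_def norm_mult by (simp add: mult_left_mono mult.commute)
  qed
  finally show ?thesis .
qed

lemma nn_integral_root_component_le:
  assumes R: "finite R" and i: "i \<notin> R" and B: "B \<in> space M"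
  shows "(\<integral>\<^sup>+x. ennreal (cmod (\<zeta> B (x i)) * cmod (ursell_sum (insert i R) x)) \<partial>PM (insert i R))
    \<le> ennreal (fact (card R)) * (\<integral>\<^sup>+y. ennreal (cmod (\<zeta> B y)) * exp_coeff (\<lambda>k. cluster_term k y) (card R) \<partial>M)"
proof -
  let ?F = "\<lambda>x. ennreal (cmod (\<zeta> B (x i)) * cmod (ursell_sum (insert i R) x))"
  have "finite (insert i R)" using R by simp
  then have "?F \<in> borel_measurable (PM (insert i R))"
    using measurable_zeta_component[OF B, of i "insert i R"] measurable_ursell_sum[OF subset_refl]
    by measurable
  then have "(\<integral>\<^sup>+x. ?F x \<partial>PM (insert i R)) = (\<integral>\<^sup>+y. (\<integral>\<^sup>+x. ?F (x(i := y)) \<partial>PM R) \<partial>M)"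
    by (rule P.product_nn_integral_insert_rev[OF R i])
  also have "\<dots> \<le> (\<integral>\<^sup>+y. ennreal (cmod (\<zeta> B y)) * (\<integral>\<^sup>+x. ennreal (conv_exp (root_weight y x) R) \<partial>PM R) \<partial>M)"
  proof (intro nn_integral_mono)
    fix y assume y: "y \<in> space M"
    have "(\<integral>\<^sup>+x. ?F (x(i := y)) \<partial>PM R) \<le> (\<integral>\<^sup>+x. ennreal (cmod (\<zeta> B y)) * ennreal (conv_exp (root_weight y x) R) \<partial>PM R)"
      using norm_ursell_sum_insert_le[OF R i _ y]
      by (intro nn_integral_mono) (simp add: ennreal_mult'[symmetric] ennreal_leI mult_left_mono)
    also have "\<dots> = ennreal (cmod (\<zeta> B y)) * (\<integral>\<^sup>+x. ennreal (conv_exp (root_weight y x) R) \<partial>PM R)"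
      using measurable_conv_exp_root_weight[OF subset_refl R y] by (intro nn_integral_cmult) measurable
    finally show "(\<integral>\<^sup>+x. ?F (x(i := y)) \<partial>PM R) \<le> \<dots>" .
  qed
  also have "\<dots> = (\<integral>\<^sup>+y. ennreal (fact (card R)) * (ennreal (cmod (\<zeta> B y)) * exp_coeff (\<lambda>k. cluster_term k y) (card R)) \<partial>M)"
    by (intro nn_integral_cong) (simp add: nn_integral_conv_exp_root_weight R mult_ac)
  also have "\<dots> = ennreal (fact (card R)) * (\<integral>\<^sup>+y. ennreal (cmod (\<zeta> B y)) * exp_coeff (\<lambda>k. cluster_term k y) (card R) \<partial>M)"
    using measurable_zeta_left[OF B] borel_measurable_exp_coeff[OF measurable_cluster_term]
    by (intro nn_integral_cmult) measurable
  finally show ?thesis .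
qed

lemma cluster_term_Suc_le:
  assumes B: "B \<in> space M"
  shows "cluster_term (Suc m) B \<le> (\<integral>\<^sup>+y. ennreal (cmod (\<zeta> B y)) * exp_coeff (\<lambda>k. cluster_term k y) m \<partial>M)"
    (is "_ \<le> ?I")
proof -
  let ?J = "{..<Suc m}"
  have "cluster_integral ?J B = (\<Sum>i\<in>?J. \<integral>\<^sup>+x. ennreal (cmod (\<zeta> B (x i)) * cmod (ursell_sum ?J x)) \<partial>PM ?J)"
    unfolding cluster_integral_def root_weight_def sum_distrib_right
    using measurable_zeta_component[OF B] measurable_ursell_sum[of ?J ?J]
    by (subst nn_integral_sum[symmetric]) (auto intro!: nn_integral_cong simp: sum_ennreal simp del: sum.lessThan_Suc)
  also have "\<dots> \<le> (\<Sum>i\<in>?J. ennreal (fact m) * ?I)"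
  proof (intro sum_mono)
    fix i assume "i \<in> ?J"
    then have "?J = insert i (?J - {i})" "card (?J - {i}) = m" by auto
    then show "(\<integral>\<^sup>+x. ennreal (cmod (\<zeta> B (x i)) * cmod (ursell_sum ?J x)) \<partial>PM ?J) \<le> ennreal (fact m) * ?I"
      using nn_integral_root_component_le[of "?J - {i}" i B] B by simp
  qed
  also have "\<dots> = ennreal (fact (Suc m)) * ?I"
    by (simp add: ennreal_of_nat_eq_real_of_nat ennreal_mult[symmetric] mult.assoc[symmetric] del: of_nat_Suc)
  finally have "ennreal (1 / fact (Suc m)) * cluster_integral ?J B \<le> ennreal (1 / fact (Suc m)) * (ennreal (fact (Suc m)) * ?I)"
    by (rule mult_left_mono) simp
  then show ?thesis
    by (simp add: cluster_term_def mult.assoc[symmetric] ennreal_mult[symmetric] del: ennreal_mult')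
qed

lemma sum_cluster_term_le:
  assumes a_nonneg: "\<And>x. x \<in> space M \<Longrightarrow> 0 \<le> a x"
    and KP: "\<And>x. x \<in> space M \<Longrightarrow> (\<integral>\<^sup>+ y. ennreal (cmod (\<zeta> x y) * exp (a y)) \<partial>M) \<le> ennreal (a x)"
    and B: "B \<in> space M"
  shows "(\<Sum>k\<in>{1..N}. cluster_term k B) \<le> ennreal (a B)"
  using B
proof (induction N arbitrary: B)
  case (Suc N)
  have "(\<Sum>k\<in>{1..Suc N}. cluster_term k B) = (\<Sum>m\<le>N. cluster_term (Suc m) B)"
    using sum.atLeast1_atMost_eq[of "\<lambda>k. cluster_term k B" "Suc N"] by (simp only: One_nat_def lessThan_Suc_atMost)
  also have "\<dots> \<le> (\<Sum>m\<le>N. \<integral>\<^sup>+y. ennreal (cmod (\<zeta> B y)) * exp_coeff (\<lambda>k. cluster_term k y) m \<partial>M)"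
    by (intro sum_mono cluster_term_Suc_le Suc.prems)
  also have "\<dots> = (\<integral>\<^sup>+y. ennreal (cmod (\<zeta> B y)) * (\<Sum>m\<le>N. exp_coeff (\<lambda>k. cluster_term k y) m) \<partial>M)"
    unfolding sum_distrib_left
    using measurable_zeta_left[OF Suc.prems] borel_measurable_exp_coeff[OF measurable_cluster_term]
    by (intro nn_integral_sum[symmetric]) measurable
  also have "\<dots> \<le> (\<integral>\<^sup>+y. ennreal (cmod (\<zeta> B y) * exp (a y)) \<partial>M)"
  proof (intro nn_integral_mono)
    fix y assume y: "y \<in> space M"
    have "(\<Sum>m\<le>N. exp_coeff (\<lambda>k. cluster_term k y) m) \<le> ennreal (exp (a y))"
      using Suc.IH[OF y] a_nonneg[OF y] by (rule sum_exp_coeff_le_exp)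
    then show "ennreal (cmod (\<zeta> B y)) * (\<Sum>m\<le>N. exp_coeff (\<lambda>k. cluster_term k y) m) \<le> ennreal (cmod (\<zeta> B y) * exp (a y))"
      by (simp add: ennreal_mult' mult_left_mono)
  qed
  also have "\<dots> \<le> ennreal (a B)"
    by (rule KP[OF Suc.prems])
  finally show ?case .
qed simp

lemma ursell_eq_ursell_sum: "ursell \<zeta> (Suc n) x = ursell_sum {..<Suc n} x / fact (Suc n)"
proof (cases n)
  case 0
  have "{G. connected_on {..<Suc 0} G} = {{}}"
    by (auto simp: connected_on_def complete_edges_def)
  with 0 show ?thesis by (simp add: ursell_def ursell_sum_def conn_graph_sum_def)
next
  case (Suc k)
  have "(\<Sum>G\<in>conn_graphs (Suc n). \<Prod>(i, j)\<in>G. \<zeta> (x i) (x j)) = ursell_sum {..<Suc n} x"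
    unfolding ursell_sum_def conn_graph_sum_def conn_graphs_def connected_graph_def connected_on_def
      graph_edges_def complete_edges_def
    by (intro sum.cong) (auto simp: case_prod_beta)
  with Suc show ?thesis by (simp add: ursell_def del: fact_Suc)
qed

lemma nn_integral_ursell_eq_cluster_term:
  assumes A: "A \<in> space M"
  shows "(\<integral>\<^sup>+x. ennreal ((\<Sum>i<Suc n. cmod (\<zeta> A (x i))) * cmod (ursell \<zeta> (Suc n) x)) \<partial>PM {..<Suc n}) =
    cluster_term (Suc n) A"
proof -
  have "ennreal ((\<Sum>i<Suc n. cmod (\<zeta> A (x i))) * cmod (ursell \<zeta> (Suc n) x)) =
      ennreal (1 / fact (Suc n)) * ennreal (root_weight A x {..<Suc n})" for x
    by (simp add: ursell_eq_ursell_sum root_weight_def norm_divide ennreal_mult'[symmetric]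
        del: sum.lessThan_Suc fact_Suc)
  then show ?thesis
    unfolding cluster_term_def cluster_integral_def
    using measurable_root_weight[OF subset_refl _ A, of "{..<Suc n}"]
    by (simp del: sum.lessThan_Suc, intro nn_integral_cmult) measurable
qed

end


theorem mainTheorem2:
  fixes M :: "'a measure" and \<zeta> :: "'a \<Rightarrow> 'a \<Rightarrow> complex" and a :: "'a \<Rightarrow> real"
  assumes fin: "finite_measure M"
    and zeta_meas: "(\<lambda>p. \<zeta> (fst p) (snd p)) \<in> borel_measurable (M \<Otimes>\<^sub>M M)"
    and zeta_sym: "\<And>x y. x \<in> space M \<Longrightarrow> y \<in> space M \<Longrightarrow> \<zeta> x y = \<zeta> y x"
    and zeta_bound: "\<And>x y. x \<in> space M \<Longrightarrow> y \<in> space M \<Longrightarrow> cmod (1 + \<zeta> x y) \<le> 1"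
    and a_meas: "a \<in> borel_measurable M"
    and a_nonneg: "\<And>x. x \<in> space M \<Longrightarrow> 0 \<le> a x"
    and KP: "\<And>x. x \<in> space M \<Longrightarrow>
       (\<integral>\<^sup>+ y. ennreal (cmod (\<zeta> x y) * exp (a y)) \<partial>M) \<le> ennreal (a x)"
    and exp_fin: "(\<integral>\<^sup>+ y. ennreal (exp (a y)) \<partial>M) < \<infinity>"
    and A: "A \<in> space M"
  shows "(\<Sum>n. \<integral>\<^sup>+ x. ennreal ((\<Sum>i<Suc n. cmod (\<zeta> A (x i))) * cmod (ursell \<zeta> (Suc n) x))
            \<partial>(PiM {..<Suc n} (\<lambda>_. M))) \<le> ennreal (a A)"
proof -
  interpret polymer_system M \<zeta>
    using fin zeta_meas zeta_sym zeta_bound by (rule polymer_system.intro)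
  have "(\<Sum>n. cluster_term (Suc n) A) \<le> ennreal (a A)"
  proof (rule suminf_le_const)
    fix n
    have "(\<Sum>i<n. cluster_term (Suc i) A) = (\<Sum>k\<in>{1..n}. cluster_term k A)"
      using sum.atLeast1_atMost_eq[of "\<lambda>k. cluster_term k A" n] by simp
    also have "\<dots> \<le> ennreal (a A)"
      by (rule sum_cluster_term_le[OF a_nonneg KP A])
    finally show "(\<Sum>i<n. cluster_term (Suc i) A) \<le> ennreal (a A)" .
  qed simp
  then show ?thesis
    by (simp only: nn_integral_ursell_eq_cluster_term[OF A])
qed

end
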